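(* The sequence $\nu=(\nu_k)_{k\in\mathbb N}$ is bounded from above if and only if there exists a $\mathcal{KL}_{\rm gen}$-$\operatorname{Fin}(X^{\rm in})$ upper bound $(\gamma,\theta)$ for $(X^{\rm in},T,\varphi)$. If moreover $G^{>}_\nu\neq\emptyset$, then $(\gamma,\theta)$ can be chosen useful for $\nu$.
   Context: Standing data: a nonempty set $X^{\rm in}\subseteq\mathbb R^d$, a map $T:\mathbb R^d\to\mathbb R^d$ ($T^k$ its $k$-fold composition, $T^0=\mathrm{Id}$), $\varphi:\mathbb R^d\to\mathbb R$ with $\varphi(0)=0$; $\nu_k=\sup_{x\in X^{\rm in}}\varphi(T^k(x))$, assumed finite for every $k$. $G^{>}_\nu=\{k:\nu_k>\limsup_n\nu_n\}$. For $f:\mathbb R^d\to\mathbb R\cup\{+\infty\}$, $\overline f:=\sup_{x\in X^{\rm in}}f(x)$; $\operatorname{Fin}(X^{\rm in})=\{f:\mathbb R^d\to\mathbb R\cup\{+\infty\}:\overline f<+\infty\}$. $\mathcal{KL}_{\rm gen}$ is the set of functions $\gamma:\mathbb R\times\mathbb R_+\to\mathbb R$ such that $s\mapsto\gamma(s,t)$ is (not necessarily strictly) increasing for every $t\ge0$ and $t\mapsto\gamma(s,t)$ is (not necessarily strictly) decreasing for every $s\in\mathbb R$. A pair $(\gamma,\theta)\in\mathcal{KL}_{\rm gen}\times\operatorname{Fin}(X^{\rm in})$ is a $\mathcal{KL}_{\rm gen}$-$\operatorname{Fin}(X^{\rm in})$ upper bound for $(X^{\rm in},T,\varphi)$ if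 $\varphi(T^k(x))\le\gamma(\theta(x),k)$ for all $k\in\mathbb N$, $x\in X^{\rm in}$; it is useful for $\nu$ (when $G^{>}_\nu\ne\emptyset$) if $\{k\in G^{>}_\nu:\inf_{t\ge0}\gamma(\overline\theta,t)<\nu_k\}\neq\emptyset$. *)

theory Defs
  imports "HOL-Analysis.Analysis"
begin

definition nu :: "('a set) \<Rightarrow> ('a \<Rightarrow> 'a) \<Rightarrow> ('a \<Rightarrow> real) \<Rightarrow> nat \<Rightarrow> real" where
  "nu X T \<phi> k = (SUP x\<in>X. \<phi> ((T ^^ k) x))"

definition Ggt :: "(nat \<Rightarrow> real) \<Rightarrow> nat set" where
  "Ggt \<nu> = {k. ereal (\<nu> k) > limsup (\<lambda>n. ereal (\<nu> n))}"

text \<open>Functions into R union {+infinity} are modelled as ereal-valued functions never equal to -infinity.\<close>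
definition sup_on :: "'a set \<Rightarrow> ('a \<Rightarrow> ereal) \<Rightarrow> ereal" where
  "sup_on X f = (SUP x\<in>X. f x)"

definition Fin :: "'a set \<Rightarrow> ('a \<Rightarrow> ereal) set" where
  "Fin X = {f. (\<forall>x. f x \<noteq> -\<infinity>) \<and> sup_on X f < \<infinity>}"

text \<open>KL_gen: gamma : R x R_+ -> R, increasing in s for each t >= 0, decreasing in t on [0,inf) for each s.
  Values at t < 0 are irrelevant.\<close>
definition KL_gen :: "(real \<Rightarrow> real \<Rightarrow> real) set" where
  "KL_gen = {\<gamma>. (\<forall>t\<ge>0. mono (\<lambda>s. \<gamma> s t)) \<and> (\<forall>s. antimono_on {0..} (\<lambda>t. \<gamma> s t))}"

definition is_upper_bound ::
  "'a set \<Rightarrow> ('a \<Rightarrow> 'a) \<Rightarrow> ('a \<Rightarrow> real) \<Rightarrow> (real \<Rightarrow> real \<Rightarrow> real) \<Rightarrow> ('a \<Rightarrow> ereal) \<Rightarrow> bool" where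
  "is_upper_bound X T \<phi> \<gamma> \<theta> \<longleftrightarrow> \<gamma> \<in> KL_gen \<and> \<theta> \<in> Fin X \<and>
     (\<forall>k::nat. \<forall>x\<in>X. \<phi> ((T ^^ k) x) \<le> \<gamma> (real_of_ereal (\<theta> x)) (real k))"

definition useful :: "(nat \<Rightarrow> real) \<Rightarrow> 'a set \<Rightarrow> (real \<Rightarrow> real \<Rightarrow> real) \<Rightarrow> ('a \<Rightarrow> ereal) \<Rightarrow> bool" where
  "useful \<nu> X \<gamma> \<theta> \<longleftrightarrow>
     {k \<in> Ggt \<nu>. (INF t\<in>{0::real..}. ereal (\<gamma> (real_of_ereal (sup_on X \<theta>)) t)) < ereal (\<nu> k)} \<noteq> {}"

end

theory Submission
  imports Defs
begin

text \<open>If \<open>\<nu>\<close> is bounded, the bound \<open>\<gamma>(s, t) = sup {\<nu>\<^sub>j | j \<ge> t}\<close>, which ignores \<open>s\<close>, with the constant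
  \<open>\<theta> = 0\<close> is a \<open>\<K>\<L>\<^sub>g\<^sub>e\<^sub>n\<close>-\<open>Fin\<close> upper bound; as \<open>t \<rightarrow> \<infinity>\<close> it decreases to \<open>limsup \<nu>\<close>, so it is useful
  whenever some \<open>\<nu>\<^sub>k\<close> exceeds \<open>limsup \<nu>\<close>. Conversely, monotonicity of \<open>\<gamma>\<close> in both arguments bounds
  every \<open>\<nu>\<^sub>k\<close> by \<open>\<gamma>(sup \<theta>, 0)\<close>.\<close>

definition tail_sup :: "(nat \<Rightarrow> real) \<Rightarrow> real \<Rightarrow> real" where
  "tail_sup \<nu> t = (SUP j\<in>{j. t \<le> real j}. \<nu> j)"

lemma tail_nonempty: "{j::nat. t \<le> real j} \<noteq> {}"
  using real_arch_simple[of t] by auto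

lemma tail_sup_antimono:
  assumes "bdd_above (range \<nu>)" and "t \<le> t'"
  shows "tail_sup \<nu> t' \<le> tail_sup \<nu> t"
  unfolding tail_sup_def
  by (rule cSUP_subset_mono[OF tail_nonempty])
    (use assms in \<open>auto intro: bdd_above_mono\<close>)

lemma le_tail_sup:
  assumes "bdd_above (range \<nu>)"
  shows "\<nu> k \<le> tail_sup \<nu> (real k)"
  unfolding tail_sup_def
  by (rule cSUP_upper) (use assms in \<open>auto intro: bdd_above_mono\<close>)

lemma tail_sup_le:
  assumes "\<And>m. N \<le> m \<Longrightarrow> \<nu> m \<le> c"
  shows "tail_sup \<nu> (real N) \<le> c"
  unfolding tail_sup_def
  by (rule cSUP_least[OF tail_nonempty]) (simp add: assms)

lemma tail_sup_KL_gen: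
  assumes "bdd_above (range \<nu>)"
  shows "(\<lambda>s t. tail_sup \<nu> t) \<in> KL_gen"
  unfolding KL_gen_def
  by (auto simp: mono_def intro!: monotone_onI tail_sup_antimono[OF assms])

lemma Ggt_imp_eventually_below:
  assumes "k \<in> Ggt \<nu>"
  obtains c N where "c < \<nu> k" and "\<And>m. N \<le> m \<Longrightarrow> \<nu> m \<le> c"
proof -
  have "(INF n. SUP m\<in>{n..}. ereal (\<nu> m)) < ereal (\<nu> k)"
    using assms unfolding Ggt_def by (simp add: limsup_INF_SUP)
  then obtain N where N: "(SUP m\<in>{N..}. ereal (\<nu> m)) < ereal (\<nu> k)"
    by (auto simp: INF_less_iff)
  then obtain c where c: "(SUP m\<in>{N..}. ereal (\<nu> m)) < ereal c" "ereal c < ereal (\<nu> k)"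
    by (blast dest: ereal_dense2)
  have below: "\<nu> m \<le> c" if "N \<le> m" for m
  proof -
    have "ereal (\<nu> m) \<le> (SUP m\<in>{N..}. ereal (\<nu> m))"
      using that by (intro SUP_upper) simp
    also have "\<dots> \<le> ereal c"
      using c(1) by (rule less_imp_le)
    finally show ?thesis by simp
  qed
  from c(2) below show thesis by (intro that) simp_all
qed

lemma phi_le_nu:
  assumes "bdd_above ((\<lambda>x. \<phi> ((T ^^ k) x)) ` X)" and "x \<in> X"
  shows "\<phi> ((T ^^ k) x) \<le> nu X T \<phi> k"
  unfolding nu_def using assms by (rule cSUP_upper2) simp

lemma sup_on_zero: "X \<noteq> {} \<Longrightarrow> sup_on X (\<lambda>x. 0) = 0"
  unfolding sup_on_def by simp

lemma is_upper_bound_tail_sup: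
  assumes "X \<noteq> {}" and "bdd_above (range (nu X T \<phi>))"
    and "\<And>k. bdd_above ((\<lambda>x. \<phi> ((T ^^ k) x)) ` X)"
  shows "is_upper_bound X T \<phi> (\<lambda>s t. tail_sup (nu X T \<phi>) t) (\<lambda>x. 0)"
proof -
  have "\<phi> ((T ^^ k) x) \<le> tail_sup (nu X T \<phi>) (real k)" if "x \<in> X" for k x
    using phi_le_nu[OF assms(3) that] le_tail_sup[OF assms(2)] by (rule order_trans)
  then show ?thesis
    unfolding is_upper_bound_def Fin_def
    using tail_sup_KL_gen[OF assms(2)] sup_on_zero[OF assms(1)] by simp
qed

lemma useful_tail_sup:
  assumes "X \<noteq> {}" and "k \<in> Ggt \<nu>"
  shows "useful \<nu> X (\<lambda>s t. tail_sup \<nu> t) (\<lambda>x. 0)"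
proof -
  obtain c N where c: "c < \<nu> k" and below: "\<And>m. N \<le> m \<Longrightarrow> \<nu> m \<le> c"
    using Ggt_imp_eventually_below[OF assms(2)] by blast
  have "(INF t\<in>{0::real..}. ereal (tail_sup \<nu> t)) \<le> ereal (tail_sup \<nu> (real N))"
    by (rule INF_lower) simp
  also have "\<dots> \<le> ereal c"
    using tail_sup_le[OF below] by simp
  also have "\<dots> < ereal (\<nu> k)"
    using c by simp
  finally show ?thesis
    unfolding useful_def using assms(2) by blast
qed

lemma Fin_le_sup_on:
  assumes "\<theta> \<in> Fin X" and "x \<in> X"
  shows "real_of_ereal (\<theta> x) \<le> real_of_ereal (sup_on X \<theta>)"
proof -
  have "\<theta> x \<le> sup_on X \<theta>"
    unfolding sup_on_def using assms(2) by (rule SUP_upper)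
  moreover have "\<theta> x \<noteq> -\<infinity>" and "sup_on X \<theta> < \<infinity>"
    using assms(1) unfolding Fin_def by auto
  ultimately show ?thesis
    by (cases "\<theta> x"; cases "sup_on X \<theta>") auto
qed

lemma KL_gen_le_at_zero:
  assumes "\<gamma> \<in> KL_gen" and "s \<le> r" and "0 \<le> t"
  shows "\<gamma> s t \<le> \<gamma> r 0"
proof -
  have "\<gamma> s t \<le> \<gamma> r t"
    using assms unfolding KL_gen_def by (auto dest: monoD)
  also have "\<dots> \<le> \<gamma> r 0"
    using assms unfolding KL_gen_def by (auto dest: monotone_onD)
  finally show ?thesis .
qed

lemma is_upper_bound_imp_bdd_above:
  assumes "X \<noteq> {}" and "is_upper_bound X T \<phi> \<gamma> \<theta>"
  shows "bdd_above (range (nu X T \<phi>))"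
proof (rule bdd_aboveI2)
  fix k
  let ?r = "real_of_ereal (sup_on X \<theta>)"
  show "nu X T \<phi> k \<le> \<gamma> ?r 0"
    unfolding nu_def
  proof (rule cSUP_least[OF assms(1)])
    fix x assume "x \<in> X"
    moreover note assms(2)[unfolded is_upper_bound_def]
    ultimately have "\<phi> ((T ^^ k) x) \<le> \<gamma> (real_of_ereal (\<theta> x)) (real k)"
      and "\<gamma> (real_of_ereal (\<theta> x)) (real k) \<le> \<gamma> ?r 0"
      by (simp_all add: KL_gen_le_at_zero Fin_le_sup_on)
    then show "\<phi> ((T ^^ k) x) \<le> \<gamma> ?r 0" by linarith
  qed
qed

theorem mainTheorem10:
  fixes X :: "(real ^ 'd) set" and T :: "real ^ 'd \<Rightarrow> real ^ 'd" and \<phi> :: "real ^ 'd \<Rightarrow> real"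
  assumes "X \<noteq> {}"
    and "\<phi> 0 = 0"
    and "\<forall>k. bdd_above ((\<lambda>x. \<phi> ((T ^^ k) x)) ` X)"
  shows "(bdd_above (range (nu X T \<phi>)) \<longleftrightarrow> (\<exists>\<gamma> \<theta>. is_upper_bound X T \<phi> \<gamma> \<theta>))
    \<and> (bdd_above (range (nu X T \<phi>)) \<and> Ggt (nu X T \<phi>) \<noteq> {} \<longrightarrow>
         (\<exists>\<gamma> \<theta>. is_upper_bound X T \<phi> \<gamma> \<theta> \<and> useful (nu X T \<phi>) X \<gamma> \<theta>))"
proof -
  have bounded_iff: "bdd_above (range (nu X T \<phi>)) \<longleftrightarrow> (\<exists>\<gamma> \<theta>. is_upper_bound X T \<phi> \<gamma> \<theta>)"
    using is_upper_bound_tail_sup[OF assms(1) _ assms(3)[rule_format]]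
      is_upper_bound_imp_bdd_above[OF assms(1)]
    by metis
  moreover have "bdd_above (range (nu X T \<phi>)) \<and> Ggt (nu X T \<phi>) \<noteq> {} \<longrightarrow>
      (\<exists>\<gamma> \<theta>. is_upper_bound X T \<phi> \<gamma> \<theta> \<and> useful (nu X T \<phi>) X \<gamma> \<theta>)"
  proof
    assume "bdd_above (range (nu X T \<phi>)) \<and> Ggt (nu X T \<phi>) \<noteq> {}"
    then obtain k where bounded: "bdd_above (range (nu X T \<phi>))" and k: "k \<in> Ggt (nu X T \<phi>)"
      by blast
    show "\<exists>\<gamma> \<theta>. is_upper_bound X T \<phi> \<gamma> \<theta> \<and> useful (nu X T \<phi>) X \<gamma> \<theta>"
      using is_upper_bound_tail_sup[OF assms(1) bounded assms(3)[rule_format]]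
        useful_tail_sup[OF assms(1) k] by blast
  qed
  ultimately show ?thesis ..
qed

end
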